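(* Let $G=(\Sigma,S,s_0,\delta)$ be a regular commutative grammar and let $K\in\mathbb{N}^\Sigma$. Then $K\in\mathrm{out}(G)$ if and only if there exist a run $D$ of $G$ with $\|D\| = O(|S|^{2|\Sigma|}\,|\Sigma|!)$ (the implicit constant being independent of $G$ and $K$), and simple cycles $C_1,\ldots,C_m\in\mathcal{C}_{\mathrm{supp}(D)}$ such that $C_1,\ldots,C_m$ are linearly independent and $K=\mathrm{out}(D)+\sum_{i=1}^m \alpha^i\,\mathrm{out}(C_i)$ for some $\alpha^1,\ldots,\alpha^m\in\mathbb{N}$.
   Context: For a finite set $X$, elements of $\mathbb{N}^X$ are multisets over $X$; for $v\in\mathbb{Q}^X$, $|v|=\sum_{x}|v(x)|$ and $\|v\|=\max_x|v(x)|$. A commutative grammar is $G=(\Sigma,S,s_0,\delta)$ where $\Sigma$ is a finite alphabet, $S$ a finite set of states, $s_0\in S$ the initial state, and $\delta\subseteq S\times\mathbb{N}^\Sigma\times\mathbb{N}^S$ a finite set of transitions; a transition $\tau=(s,a,t)$ has $\mathrm{source}(\tau)=s$, $\mathrm{out}(\tau)=a$, $\mathrm{target}(\tau)=t$. It is assumed that every state is the source of some transition and that every transition satisfies $|a|\le 1$, $|t|\le 2$. The grammar is regular if $|t|\le 1$ for every transition. For $D\in\mathbb{N}^\delta$: $\mathrm{source}(D)(s)=\sum_{\tau:\mathrm{source}(\tau)=s}D(\tau)$, $\mathrm{out}(D)=\sum_\tau D(\tau)\mathrm{out}(\tau)$, $\mathrm{target}(D)=\sum_\tau D(\tau)\mathrm{target}(\tau)$,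 and $\mathrm{supp}(D)=\{s\in S:\mathrm{source}(D)(s)>0\}$. $D$ is connected from $s$ if for every $t\in\mathrm{supp}(D)$, either $t=s$ or there are transitions $\tau_1,\ldots,\tau_m$ with $D(\tau_i)>0$, $\mathrm{source}(\tau_1)=s$, $\mathrm{source}(\tau_{i+1})\in\mathrm{target}(\tau_i)$ and $t\in\mathrm{target}(\tau_m)$. $D$ is a cycle from $s$ if it is connected from $s$ and $\mathrm{source}(D)=\mathrm{target}(D)$; $D$ is a run if it is connected from $s_0$ and $\mathrm{source}(D)=\mathrm{target}(D)+\{s_0\}$. $\mathrm{out}(G)=\{\mathrm{out}(D): D \text{ a run of } G\}$. A simple cycle is a nonzero cycle that cannot be written as a sum of smaller nonzero cycles; $\mathcal{C}_s$ is the set of simple cycles from $s$, and $\mathcal{C}_T=\bigcup_{s\in T}\mathcal{C}_s$ for $T\subseteq S$. *)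

theory Defs
  imports Complex_Main "HOL-Library.Multiset"
begin

text \<open>Alphabet symbols and states are natural numbers (every finite grammar is
isomorphic to one of this form; fixing the types makes the constant in the
O-bound genuinely independent of the grammar).  Elements of N^X are multisets.\<close>

type_synonym trans = "nat \<times> nat multiset \<times> nat multiset"

definition src :: "trans \<Rightarrow> nat" where "src \<tau> = fst \<tau>"
definition outp :: "trans \<Rightarrow> nat multiset" where "outp \<tau> = fst (snd \<tau>)"
definition tgt :: "trans \<Rightarrow> nat multiset" where "tgt \<tau> = snd (snd \<tau>)"

definition comm_grammar ::
  "nat set \<Rightarrow> nat set \<Rightarrow> nat \<Rightarrow> trans set \<Rightarrow> bool" where
  "comm_grammar \<Sigma> S s0 \<delta> \<longleftrightarrow>
     finite \<Sigma> \<and> finite S \<and> s0 \<in> S \<and> finite \<delta> \<and>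
     (\<forall>\<tau>\<in>\<delta>. src \<tau> \<in> S \<and> set_mset (outp \<tau>) \<subseteq> \<Sigma> \<and> set_mset (tgt \<tau>) \<subseteq> S
            \<and> size (outp \<tau>) \<le> 1 \<and> size (tgt \<tau>) \<le> 2) \<and>
     (\<forall>s\<in>S. \<exists>\<tau>\<in>\<delta>. src \<tau> = s)"

definition regular_grammar ::
  "nat set \<Rightarrow> nat set \<Rightarrow> nat \<Rightarrow> trans set \<Rightarrow> bool" where
  "regular_grammar \<Sigma> S s0 \<delta> \<longleftrightarrow>
     comm_grammar \<Sigma> S s0 \<delta> \<and> (\<forall>\<tau>\<in>\<delta>. size (tgt \<tau>) \<le> 1)"

text \<open>D in N^delta is a multiset of transitions with set_mset D contained in delta.\<close>

definition source_of :: "trans multiset \<Rightarrow> nat multiset" where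
  "source_of D = image_mset src D"

definition out_of :: "trans multiset \<Rightarrow> nat multiset" where
  "out_of D = \<Sum>\<^sub># (image_mset outp D)"

definition target_of :: "trans multiset \<Rightarrow> nat multiset" where
  "target_of D = \<Sum>\<^sub># (image_mset tgt D)"

definition supp :: "trans multiset \<Rightarrow> nat set" where
  "supp D = set_mset (source_of D)"

definition mnorm :: "trans multiset \<Rightarrow> nat" where
  "mnorm D = Max (insert 0 (count D ` set_mset D))"

definition connected_from :: "trans multiset \<Rightarrow> nat \<Rightarrow> bool" where
  "connected_from D s \<longleftrightarrow>
     (\<forall>t\<in>supp D. t = s \<or>
        (\<exists>taus. taus \<noteq> [] \<and> (\<forall>\<tau>\<in>set taus. \<tau> \<in># D) \<and> src (hd taus) = s \<and>
           (\<forall>i. Suc i < length taus \<longrightarrow> src (taus ! Suc i) \<in># tgt (taus ! i)) \<and>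
           t \<in># tgt (last taus)))"

definition cycle_from :: "trans set \<Rightarrow> trans multiset \<Rightarrow> nat \<Rightarrow> bool" where
  "cycle_from \<delta> D s \<longleftrightarrow> set_mset D \<subseteq> \<delta> \<and> connected_from D s \<and> source_of D = target_of D"

definition is_cycle :: "trans set \<Rightarrow> trans multiset \<Rightarrow> bool" where
  "is_cycle \<delta> D \<longleftrightarrow> (\<exists>s. cycle_from \<delta> D s)"

definition simple_cycle :: "trans set \<Rightarrow> trans multiset \<Rightarrow> bool" where
  "simple_cycle \<delta> C \<longleftrightarrow> C \<noteq> {#} \<and> is_cycle \<delta> C \<and>
     \<not> (\<exists>Cs. (\<forall>C'\<in>set Cs. C' \<noteq> {#} \<and> is_cycle \<delta> C' \<and> C' \<subset># C) \<and> sum_list Cs = C)"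

definition simple_cycles_from :: "trans set \<Rightarrow> nat set \<Rightarrow> trans multiset set" where
  "simple_cycles_from \<delta> T = {C. \<exists>s\<in>T. simple_cycle \<delta> C \<and> cycle_from \<delta> C s}"

definition is_run :: "trans set \<Rightarrow> nat \<Rightarrow> trans multiset \<Rightarrow> bool" where
  "is_run \<delta> s0 D \<longleftrightarrow> set_mset D \<subseteq> \<delta> \<and> connected_from D s0 \<and>
     source_of D = target_of D + {#s0#}"

definition out_lang :: "trans set \<Rightarrow> nat \<Rightarrow> nat multiset set" where
  "out_lang \<delta> s0 = {out_of D | D. is_run \<delta> s0 D}"

definition lin_indep :: "trans multiset list \<Rightarrow> bool" where
  "lin_indep Cs \<longleftrightarrow>
     (\<forall>c :: nat \<Rightarrow> rat.
        (\<forall>\<tau>. (\<Sum>i<length Cs. c i * of_nat (count (Cs ! i) \<tau>)) = 0) \<longrightarrow>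
        (\<forall>i<length Cs. c i = 0))"

end

theory Submission
  imports Defs "HOL-Library.Function_Algebras"
begin

text \<open>
  Adding simple cycles from the support of a run to it yields again a run, which gives one
  direction.  Conversely, let \<open>R\<close> be a run.  As long as the part of \<open>R\<close> exceeding its
  support contains a cycle, a simple cycle can be split off without changing the support; once
  it is acyclic, a counting argument bounds every multiplicity by \<open>|\<delta>| + 2\<close>.  By
  Caratheodory's theorem the split-off simple cycles form a nonnegative rational combination of
  at most \<open>|\<delta>|\<close> linearly independent ones, and rounding its coefficients down leaves a
  balanced remainder of multiplicity at most \<open>|\<delta>|\<close>, which is moved back into the run.  Since
  \<open>|\<delta>| \<le> |S| (|\<Sigma>| + 1) (|S| + 1)\<close>, this gives the bound; for \<open>\<Sigma> = {}\<close>, where the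
  bound is a constant, a cycle-free run is used instead.
\<close>

lemma source_of_empty [simp]: "source_of {#} = {#}"
  by (simp add: source_of_def)

lemma target_of_empty [simp]: "target_of {#} = {#}"
  by (simp add: target_of_def)

lemma out_of_empty [simp]: "out_of {#} = {#}"
  by (simp add: out_of_def)

lemma source_of_add_mset [simp]: "source_of (add_mset \<tau> A) = add_mset (src \<tau>) (source_of A)"
  by (simp add: source_of_def)

lemma target_of_add_mset [simp]: "target_of (add_mset \<tau> A) = tgt \<tau> + target_of A"
  by (simp add: target_of_def)

lemma out_of_add_mset [simp]: "out_of (add_mset \<tau> A) = outp \<tau> + out_of A"
  by (simp add: out_of_def)

lemma source_of_union [simp]: "source_of (A + B) = source_of A + source_of B"
  by (simp add: source_of_def)

lemma target_of_union [simp]: "target_of (A + B) = target_of A + target_of B"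
  by (simp add: target_of_def)

lemma out_of_union [simp]: "out_of (A + B) = out_of A + out_of B"
  by (simp add: out_of_def)

lemma source_of_repeat_mset [simp]: "source_of (repeat_mset n A) = repeat_mset n (source_of A)"
  by (induction n) auto

lemma target_of_repeat_mset [simp]: "target_of (repeat_mset n A) = repeat_mset n (target_of A)"
  by (induction n) auto

lemma out_of_repeat_mset [simp]: "out_of (repeat_mset n A) = repeat_mset n (out_of A)"
  by (induction n) auto

lemma source_of_sum: "source_of (\<Sum>i\<in>I. f i) = (\<Sum>i\<in>I. source_of (f i))"
  by (induction I rule: infinite_finite_induct) auto

lemma target_of_sum: "target_of (\<Sum>i\<in>I. f i) = (\<Sum>i\<in>I. target_of (f i))"
  by (induction I rule: infinite_finite_induct) auto

lemma out_of_sum: "out_of (\<Sum>i\<in>I. f i) = (\<Sum>i\<in>I. out_of (f i))"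
  by (induction I rule: infinite_finite_induct) auto

lemma source_of_sum_list: "source_of (sum_list As) = sum_list (map source_of As)"
  by (induction As) auto

lemma target_of_sum_list: "target_of (sum_list As) = sum_list (map target_of As)"
  by (induction As) auto

lemma size_source_of [simp]: "size (source_of A) = size A"
  by (simp add: source_of_def)

lemma set_mset_out_of_subset:
  "(\<forall>\<tau>\<in>#A. set_mset (outp \<tau>) \<subseteq> X) \<Longrightarrow> set_mset (out_of A) \<subseteq> X"
  by (induction A) auto

lemma filter_source_of:
  "filter_mset P (source_of A) = source_of (filter_mset (\<lambda>\<tau>. P (src \<tau>)) A)"
  unfolding source_of_def by (simp add: image_mset_filter_mset_swap)

lemma supp_eq_image_src: "supp A = src ` set_mset A"
  by (simp add: supp_def source_of_def)

lemma mnorm_le: "(\<And>\<tau>. count A \<tau> \<le> b) \<Longrightarrow> mnorm A \<le> b"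
  unfolding mnorm_def by (subst Max_le_iff) auto

definition regular_trans :: "trans set \<Rightarrow> bool" where
  "regular_trans T \<longleftrightarrow> (\<forall>\<tau>\<in>T. size (tgt \<tau>) \<le> 1)"

lemma regular_trans_subset: "regular_trans T \<Longrightarrow> T' \<subseteq> T \<Longrightarrow> regular_trans T'"
  unfolding regular_trans_def by blast

lemma regular_grammar_regular_trans: "regular_grammar \<Sigma> S s0 \<delta> \<Longrightarrow> regular_trans \<delta>"
  by (simp add: regular_grammar_def regular_trans_def)

lemma tgt_eq_singleton: "size (tgt \<tau>) \<le> 1 \<Longrightarrow> v \<in># tgt \<tau> \<Longrightarrow> tgt \<tau> = {#v#}"
  using multi_member_split by force

lemma size_target_of_le: "regular_trans (set_mset A) \<Longrightarrow> size (target_of A) \<le> size A"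
  by (induction A) (auto simp: regular_trans_def)

subsection \<open>The transition graph\<close>

definition edges :: "trans multiset \<Rightarrow> (nat \<times> nat) set" where
  "edges M = {(src \<tau>, v) | \<tau> v. \<tau> \<in># M \<and> v \<in># tgt \<tau>}"

lemma edgesI: "\<tau> \<in># M \<Longrightarrow> v \<in># tgt \<tau> \<Longrightarrow> (src \<tau>, v) \<in> edges M"
  unfolding edges_def by blast

lemma edgesE:
  assumes "(x, v) \<in> edges M"
  obtains \<tau> where "\<tau> \<in># M" "src \<tau> = x" "v \<in># tgt \<tau>"
  using assms unfolding edges_def by blast

definition linked :: "trans list \<Rightarrow> bool" where
  "linked ws \<longleftrightarrow> (\<forall>i. Suc i < length ws \<longrightarrow> src (ws ! Suc i) \<in># tgt (ws ! i))"

definition walk :: "trans multiset \<Rightarrow> trans list \<Rightarrow> nat \<Rightarrow> nat \<Rightarrow> bool" where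
  "walk M ws s t \<longleftrightarrow>
     ws \<noteq> [] \<and> set ws \<subseteq> set_mset M \<and> src (hd ws) = s \<and> linked ws \<and> t \<in># tgt (last ws)"

lemma connected_from_iff_walk:
  "connected_from D s \<longleftrightarrow> (\<forall>t\<in>supp D. t = s \<or> (\<exists>ws. walk D ws s t))"
  by (simp add: connected_from_def walk_def linked_def subset_eq)

lemma connected_from_cong:
  "set_mset D = set_mset D' \<Longrightarrow> connected_from D s \<Longrightarrow> connected_from D' s"
  by (simp add: connected_from_iff_walk supp_eq_image_src walk_def)

lemma linked_Cons: "linked (w # ws) \<longleftrightarrow> linked ws \<and> (ws \<noteq> [] \<longrightarrow> src (hd ws) \<in># tgt w)"
  by (cases ws) (auto simp: linked_def nth_Cons split: nat.splits)

lemma linked_append: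
  "linked ws \<Longrightarrow> linked vs \<Longrightarrow> ws \<noteq> [] \<Longrightarrow> vs \<noteq> [] \<Longrightarrow> src (hd vs) \<in># tgt (last ws) \<Longrightarrow>
   linked (ws @ vs)"
  by (induction ws) (auto simp: linked_Cons hd_append)

lemma linked_take: "linked ws \<Longrightarrow> linked (take i ws)"
  unfolding linked_def by auto

lemma walk_append: "walk M ws s t \<Longrightarrow> walk M vs t u \<Longrightarrow> walk M (ws @ vs) s u"
  unfolding walk_def by (auto intro: linked_append)

lemma walk_mono: "walk M ws s t \<Longrightarrow> set_mset M \<subseteq> set_mset M' \<Longrightarrow> walk M' ws s t"
  unfolding walk_def by auto

lemma walk_single: "\<tau> \<in># M \<Longrightarrow> v \<in># tgt \<tau> \<Longrightarrow> walk M [\<tau>] (src \<tau>) v"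
  by (simp add: walk_def linked_def)

lemma walk_take:
  assumes ws: "walk M ws s t" and i: "0 < i" "i < length ws"
  shows "walk M (take i ws) s (src (ws ! i))"
proof -
  obtain j where j: "i = Suc j"
    using i(1) by (cases i) auto
  have linked: "linked ws"
    using ws by (simp add: walk_def)
  have "last (take i ws) = ws ! j"
    using j i by (subst last_conv_nth) (auto simp: min_def)
  moreover have "src (ws ! Suc j) \<in># tgt (ws ! j)"
    using linked j i by (simp add: linked_def)
  ultimately show ?thesis
    using ws i j set_take_subset[of i ws] linked_take[OF linked] by (auto simp: walk_def)
qed

lemma rtrancl_edges_imp_distinct_walk:
  assumes "(s, t) \<in> (edges M)\<^sup>*"
  shows "t = s \<or> (\<exists>ws. walk M ws s t \<and> distinct (map src ws) \<and> t \<notin> src ` set ws)"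
  using assms
proof (induction rule: rtrancl_induct)
  case base
  then show ?case by simp
next
  case (step y z)
  from step.hyps(2) obtain \<tau> where \<tau>: "\<tau> \<in># M" "src \<tau> = y" "z \<in># tgt \<tau>"
    by (auto elim: edgesE)
  obtain ws where ws: "walk M ws s z" "distinct (map src ws)"
  proof (cases "y = s")
    case True
    then show ?thesis using walk_single[OF \<tau>(1,3)] \<tau>(2) by (intro that[of "[\<tau>]"]) auto
  next
    case False
    with step.IH obtain vs where vs: "walk M vs s y" "distinct (map src vs)" "y \<notin> src ` set vs"
      by blast
    with \<tau> show ?thesis
      by (intro that[of "vs @ [\<tau>]"]) (auto intro: walk_append walk_single)
  qed
  show ?case
  proof (cases "z \<in> src ` set ws")
    case False
    then show ?thesis using ws by blast
  next
    case True
    \<comment> \<open>cut the walk just before it first visits \<open>z\<close>\<close>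
    then obtain i where i: "i < length ws" "z = src (ws ! i)"
      by (metis imageE in_set_conv_nth)
    show ?thesis
    proof (cases "i = 0")
      case True
      then show ?thesis
        using i ws(1) by (simp add: walk_def hd_conv_nth)
    next
      case False
      then have "walk M (take i ws) s z"
        using walk_take[OF ws(1)] i by simp
      moreover have "distinct (map src (take i ws))"
        using ws(2) by (simp add: take_map[symmetric])
      moreover have "z \<notin> src ` set (take i ws)"
      proof
        assume "z \<in> src ` set (take i ws)"
        then obtain k where "k < i" "z = src (ws ! k)"
          using i by (auto simp: in_set_conv_nth)
        with i ws(2) show False
          by (metis (no_types, lifting) distinct_conv_nth length_map less_trans nat_neq_iff nth_map)
      qed
      ultimately show ?thesis by blast
    qed
  qed
qed

lemma walk_balance:
  assumes "regular_trans (set ws)" and "walk M ws x y"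
  shows "source_of (mset ws) + {#y#} = target_of (mset ws) + {#x#}"
  using assms
proof (induction ws arbitrary: x)
  case Nil
  then show ?case by (simp add: walk_def)
next
  case (Cons w ws)
  show ?case
  proof (cases ws)
    case Nil
    with Cons.prems have "tgt w = {#y#}" "src w = x"
      by (auto simp: walk_def regular_trans_def intro: tgt_eq_singleton)
    with Nil show ?thesis by simp
  next
    case (Cons w' ws')
    with Cons.prems have w: "walk M ws (src w') y" "src w' \<in># tgt w" "src w = x"
      by (auto simp: walk_def linked_Cons)
    then have "tgt w = {#src w'#}"
      using Cons.prems by (auto simp: regular_trans_def intro: tgt_eq_singleton)
    with Cons.IH[OF _ w(1)] Cons.prems w(3) show ?thesis
      by (simp add: regular_trans_def add.commute add.left_commute)
  qed
qed

lemma filter_closed_balance: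
  assumes reg: "regular_trans (set_mset M)"
    and closed: "\<forall>\<tau>\<in>#M. src \<tau> \<in> R \<longrightarrow> set_mset (tgt \<tau>) \<subseteq> R"
    and bal: "source_of M = target_of M + X" and X: "set_mset X \<subseteq> R"
  defines "M' \<equiv> filter_mset (\<lambda>\<tau>. src \<tau> \<in> R) M"
  shows "source_of M' = target_of M' + X"
proof -
  define Mo where "Mo = filter_mset (\<lambda>\<tau>. src \<tau> \<notin> R) M"
  define Y where "Y = filter_mset (\<lambda>x. x \<in> R) (target_of Mo)"
  have M: "M = M' + Mo"
    unfolding M'_def Mo_def by (rule multiset_partition)
  have "filter_mset (\<lambda>x. x \<in> R) (target_of M') = target_of M'"
    using closed unfolding M'_def by (induction M) (auto simp: filter_mset_eq_conv)
  moreover have "filter_mset (\<lambda>x. x \<in> R) X = X"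
    using X by (auto simp: filter_mset_eq_conv)
  ultimately have "filter_mset (\<lambda>x. x \<in> R) (source_of M) = target_of M' + Y + X"
    unfolding bal Y_def using M by simp
  moreover have "filter_mset (\<lambda>x. x \<in> R) (source_of M) = source_of M'"
    by (simp add: M'_def filter_source_of)
  ultimately have M': "source_of M' = target_of M' + Y + X"
    by simp
  \<comment> \<open>no transition has two targets, so counting shows that nothing enters \<open>R\<close> from outside\<close>
  have "size (target_of Mo) \<le> size Mo"
    using reg by (intro size_target_of_le) (auto simp: Mo_def intro: regular_trans_subset)
  moreover have "size M = size (target_of M') + size (target_of Mo) + size X"
    using bal M by (metis size_source_of size_union target_of_union)
  moreover have "size M' = size (target_of M') + size Y + size X"
    using M' by (metis size_source_of size_union)
  moreover have "size M = size M' + size Mo"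
    using M by simp
  ultimately have "size Y = 0"
    by linarith
  with M' show ?thesis by simp
qed

lemma rtrancl_edges_filter_reachable:
  assumes "(s, x) \<in> (edges M)\<^sup>*"
  shows "(s, x) \<in> (edges (filter_mset (\<lambda>\<tau>. (s, src \<tau>) \<in> (edges M)\<^sup>*) M))\<^sup>*"
  using assms
proof (induction rule: rtrancl_induct)
  case base
  then show ?case by simp
next
  case (step y z)
  from step.hyps(2) obtain \<sigma> where "\<sigma> \<in># M" "src \<sigma> = y" "z \<in># tgt \<sigma>"
    by (auto elim: edgesE)
  with step.hyps(1) have "(y, z) \<in> edges (filter_mset (\<lambda>\<tau>. (s, src \<tau>) \<in> (edges M)\<^sup>*) M)"
    using edgesI[of \<sigma> "filter_mset (\<lambda>\<tau>. (s, src \<tau>) \<in> (edges M)\<^sup>*) M" z] by simp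
  with step.IH show ?case by simp
qed

lemma reachable_part_balanced_connected:
  assumes reg: "regular_trans (set_mset M)"
    and bal: "source_of M = target_of M + X" and X: "\<forall>x\<in>#X. (s, x) \<in> (edges M)\<^sup>*"
  defines "M' \<equiv> filter_mset (\<lambda>\<tau>. (s, src \<tau>) \<in> (edges M)\<^sup>*) M"
  shows "source_of M' = target_of M' + X" and "connected_from M' s"
proof -
  define R where "R = {x. (s, x) \<in> (edges M)\<^sup>*}"
  have "\<forall>\<tau>\<in>#M. src \<tau> \<in> R \<longrightarrow> set_mset (tgt \<tau>) \<subseteq> R"
    unfolding R_def by (blast intro: rtrancl_into_rtrancl edgesI)
  from filter_closed_balance[OF reg this bal] X
  show "source_of M' = target_of M' + X"
    by (auto simp: M'_def R_def)
  show "connected_from M' s"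
    unfolding connected_from_iff_walk
  proof
    fix t
    assume "t \<in> supp M'"
    then have "(s, t) \<in> (edges M)\<^sup>*"
      by (auto simp: M'_def supp_eq_image_src)
    then have "(s, t) \<in> (edges M')\<^sup>*"
      unfolding M'_def by (rule rtrancl_edges_filter_reachable)
    then show "t = s \<or> (\<exists>ws. walk M' ws s t)"
      using rtrancl_edges_imp_distinct_walk by blast
  qed
qed

subsection \<open>Extracting simple cycles\<close>

lemma distinct_closed_walk:
  assumes reg: "regular_trans (set_mset A)"
    and \<tau>: "\<tau> \<in># A" "v \<in># tgt \<tau>" and reach: "(v, src \<tau>) \<in> (edges A)\<^sup>*"
  obtains B where "B \<subseteq># mset_set (set_mset A)" "B \<noteq> {#}" "source_of B = target_of B"
proof -
  obtain ws where ws: "walk A ws v v" "distinct (map src ws)"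
  proof (cases "src \<tau> = v")
    case True
    then show ?thesis using walk_single[OF \<tau>] by (intro that[of "[\<tau>]"]) auto
  next
    case False
    with rtrancl_edges_imp_distinct_walk[OF reach] obtain vs where
      "walk A vs v (src \<tau>)" "distinct (map src vs)" "src \<tau> \<notin> src ` set vs"
      by blast
    with walk_single[OF \<tau>] show ?thesis
      by (intro that[of "vs @ [\<tau>]"]) (auto intro: walk_append)
  qed
  have sub: "set ws \<subseteq> set_mset A"
    using ws(1) by (simp add: walk_def)
  have "source_of (mset ws) = target_of (mset ws)"
    using walk_balance[OF _ ws(1)] reg sub regular_trans_subset by simp
  moreover have "mset ws \<subseteq># mset_set (set_mset A)"
  proof -
    have "mset ws = mset_set (set ws)"
      using ws(2) by (metis distinct_map mset_set_set)
    then show ?thesis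
      using sub by (simp add: subset_imp_msubset_mset_set)
  qed
  moreover have "mset ws \<noteq> {#}"
    using ws(1) by (simp add: walk_def)
  ultimately show ?thesis using that by blast
qed

lemma balanced_contains_cycle:
  assumes reg: "regular_trans (set_mset B)" and B: "set_mset B \<subseteq> \<delta>"
    and ne: "B \<noteq> {#}" and bal: "source_of B = target_of B"
  obtains C where "C \<subseteq># B" "C \<noteq> {#}" "is_cycle \<delta> C"
proof -
  obtain \<tau> where \<tau>: "\<tau> \<in># B"
    using ne by fastforce
  define C where "C = filter_mset (\<lambda>\<sigma>. (src \<tau>, src \<sigma>) \<in> (edges B)\<^sup>*) B"
  have "source_of C = target_of C" "connected_from C (src \<tau>)"
    using reachable_part_balanced_connected[OF reg, of "{#}"] bal by (simp_all add: C_def)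
  then have "cycle_from \<delta> C (src \<tau>)"
    using B by (auto simp: cycle_from_def C_def)
  moreover have "\<tau> \<in># C"
    using \<tau> by (simp add: C_def)
  then have "C \<noteq> {#}"
    by auto
  ultimately show ?thesis
    using that[of C] by (auto simp: is_cycle_def C_def)
qed

lemma cycle_contains_simple_cycle:
  "C0 \<noteq> {#} \<Longrightarrow> is_cycle \<delta> C0 \<Longrightarrow> \<exists>C. C \<subseteq># C0 \<and> simple_cycle \<delta> C"
proof (induction "size C0" arbitrary: C0 rule: less_induct)
  case less
  show ?case
  proof (cases "\<exists>C'. C' \<subset># C0 \<and> C' \<noteq> {#} \<and> is_cycle \<delta> C'")
    case True
    then obtain C' where C': "C' \<subset># C0" "C' \<noteq> {#}" "is_cycle \<delta> C'"
      by blast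
    with less.hyps[of C'] mset_subset_size obtain C where "C \<subseteq># C'" "simple_cycle \<delta> C"
      by blast
    with C' show ?thesis
      by (meson subset_mset.less_imp_le subset_mset.order_trans)
  next
    case False
    \<comment> \<open>a decomposition into proper subcycles would have a first summand\<close>
    have "\<not> (\<exists>Cs. (\<forall>C'\<in>set Cs. C' \<noteq> {#} \<and> is_cycle \<delta> C' \<and> C' \<subset># C0) \<and> sum_list Cs = C0)"
    proof
      assume "\<exists>Cs. (\<forall>C'\<in>set Cs. C' \<noteq> {#} \<and> is_cycle \<delta> C' \<and> C' \<subset># C0) \<and> sum_list Cs = C0"
      then obtain Cs where "\<forall>C'\<in>set Cs. C' \<noteq> {#} \<and> is_cycle \<delta> C' \<and> C' \<subset># C0" "sum_list Cs = C0"
        by blast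
      with False less.prems show False
        by (cases Cs) auto
    qed
    with less.prems have "simple_cycle \<delta> C0"
      by (simp add: simple_cycle_def)
    then show ?thesis by blast
  qed
qed

lemma simple_cycle_if_not_acyclic:
  assumes reg: "regular_trans (set_mset A)" and A: "set_mset A \<subseteq> \<delta>"
    and "\<not> acyclic (edges A)"
  obtains C where "simple_cycle \<delta> C" "C \<subseteq># mset_set (set_mset A)"
proof -
  obtain x where "(x, x) \<in> (edges A)\<^sup>+"
    using assms(3) by (auto simp: acyclic_def)
  then obtain v where edge: "(x, v) \<in> edges A" and reach: "(v, x) \<in> (edges A)\<^sup>*"
    by (meson tranclD)
  from edge obtain \<tau> where \<tau>: "\<tau> \<in># A" "src \<tau> = x" "v \<in># tgt \<tau>"
    by (rule edgesE)
  with reach have \<tau>: "\<tau> \<in># A" "v \<in># tgt \<tau>" "(v, src \<tau>) \<in> (edges A)\<^sup>*"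
    by simp_all
  obtain B where B: "B \<subseteq># mset_set (set_mset A)" "B \<noteq> {#}" "source_of B = target_of B"
    using distinct_closed_walk[OF reg \<tau>] .
  have "B \<subseteq># A"
    using B(1) mset_set_set_mset_msubset by (rule subset_mset.order_trans)
  then have "set_mset B \<subseteq> set_mset A"
    by (rule set_mset_mono)
  then have "regular_trans (set_mset B)" "set_mset B \<subseteq> \<delta>"
    using reg A by (auto intro: regular_trans_subset)
  then obtain C0 where C0: "C0 \<subseteq># B" "C0 \<noteq> {#}" "is_cycle \<delta> C0"
    using balanced_contains_cycle B(2,3) by blast
  then obtain C where C: "C \<subseteq># C0" "simple_cycle \<delta> C"
    using cycle_contains_simple_cycle by blast
  have "C \<subseteq># mset_set (set_mset A)"
    using C(1) C0(1) B(1) by (meson subset_mset.order_trans)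
  with C(2) show ?thesis
    by (rule that)
qed

lemma cycle_from_in_supp: "cycle_from \<delta> C s \<Longrightarrow> C \<noteq> {#} \<Longrightarrow> s \<in> supp C"
proof -
  assume cf: "cycle_from \<delta> C s" and ne: "C \<noteq> {#}"
  obtain \<sigma> where "\<sigma> \<in># C"
    using ne by fastforce
  then have \<sigma>: "src \<sigma> \<in> supp C"
    by (simp add: supp_eq_image_src)
  with cf have "src \<sigma> = s \<or> (\<exists>ws. walk C ws s (src \<sigma>))"
    by (simp add: cycle_from_def connected_from_iff_walk)
  then show ?thesis
    using \<sigma> unfolding walk_def supp_eq_image_src by (metis hd_in_set image_eqI subsetD)
qed

lemma size_filter_target_of_le:
  assumes "regular_trans (set_mset A)"
  shows "size (filter_mset (\<lambda>x. x \<in> U) (target_of A)) \<le>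
         size (filter_mset (\<lambda>\<sigma>. \<exists>v\<in>#tgt \<sigma>. v \<in> U) A)"
  using assms
proof (induction A)
  case empty
  then show ?case by simp
next
  case (add \<sigma> A)
  then have IH: "size (filter_mset (\<lambda>x. x \<in> U) (target_of A)) \<le>
      size (filter_mset (\<lambda>\<sigma>. \<exists>v\<in>#tgt \<sigma>. v \<in> U) A)"
    by (simp add: regular_trans_def)
  have "size (tgt \<sigma>) \<le> 1"
    using add.prems by (simp add: regular_trans_def)
  then have "size (filter_mset (\<lambda>x. x \<in> U) (tgt \<sigma>)) \<le> 1"
    using size_filter_mset_lesseq order_trans by blast
  moreover have "filter_mset (\<lambda>x. x \<in> U) (tgt \<sigma>) = {#}" if "\<not> (\<exists>v\<in>#tgt \<sigma>. v \<in> U)"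
    using that by simp
  ultimately show ?case
    using IH by (cases "\<exists>v\<in>#tgt \<sigma>. v \<in> U") (auto simp del: filter_mset_eq_mempty_iff)
qed

text \<open>
  Let \<open>U\<close> be the set of states from which \<open>src \<tau>\<close> can be reached.
  Every transition entering \<open>U\<close> starts in \<open>U\<close> and has exactly one target, so counting
  occurrences of states of \<open>U\<close> on both sides of the balance equation bounds the number of
  transitions leaving \<open>U\<close> by \<open>size P\<close>; by acyclicity \<open>\<tau>\<close> is one of them.
\<close>

lemma count_le_size_if_acyclic:
  assumes reg: "regular_trans (set_mset A)" and acyc: "acyclic (edges A)"
    and bal: "source_of A + N = target_of A + P"
  shows "count A \<tau> \<le> size P"
proof (cases "\<tau> \<in># A")
  case False
  then show ?thesis by (simp add: not_in_iff)
next
  case True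
  define U where "U = {x. (x, src \<tau>) \<in> (edges A)\<^sup>*}"
  define enters where "enters = (\<lambda>\<sigma>. \<exists>v\<in>#tgt \<sigma>. v \<in> U)"
  define Au where "Au = filter_mset (\<lambda>\<sigma>. src \<sigma> \<in> U) A"
  have "src \<sigma> \<in> U" if "\<sigma> \<in># A" "enters \<sigma>" for \<sigma>
    using that unfolding enters_def U_def by (blast intro: converse_rtrancl_into_rtrancl edgesI)
  then have "filter_mset enters A = filter_mset enters Au"
    unfolding Au_def filter_filter_mset by (auto intro: filter_mset_cong)
  then have "size (filter_mset (\<lambda>x. x \<in> U) (target_of A)) \<le> size (filter_mset enters Au)"
    using size_filter_target_of_le[OF reg, of U] by (simp add: enters_def)
  moreover have "size (filter_mset (\<lambda>x. x \<in> U) (source_of A)) + size (filter_mset (\<lambda>x. x \<in> U) N) =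
      size (filter_mset (\<lambda>x. x \<in> U) (target_of A)) + size (filter_mset (\<lambda>x. x \<in> U) P)"
    using arg_cong[OF bal, of "\<lambda>M. size (filter_mset (\<lambda>x. x \<in> U) M)"] by simp
  moreover have "size (filter_mset (\<lambda>x. x \<in> U) (source_of A)) = size Au"
    by (simp add: filter_source_of Au_def)
  moreover have "size Au = size (filter_mset enters Au) + size (filter_mset (\<lambda>\<sigma>. \<not> enters \<sigma>) Au)"
    by (metis multiset_partition size_union)
  moreover have "size (filter_mset (\<lambda>x. x \<in> U) P) \<le> size P"
    by simp
  ultimately have leaving: "size (filter_mset (\<lambda>\<sigma>. \<not> enters \<sigma>) Au) \<le> size P"
    by linarith
  have "\<not> enters \<tau>"
  proof
    assume "enters \<tau>"
    then obtain v where "v \<in># tgt \<tau>" "(v, src \<tau>) \<in> (edges A)\<^sup>*"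
      by (auto simp: enters_def U_def)
    with True have "(src \<tau>, src \<tau>) \<in> (edges A)\<^sup>+"
      by (blast intro: rtrancl_into_trancl2 edgesI)
    with acyc show False
      by (simp add: acyclic_def)
  qed
  then have "count A \<tau> = count (filter_mset (\<lambda>\<sigma>. \<not> enters \<sigma>) Au) \<tau>"
    by (simp add: Au_def U_def)
  also have "\<dots> \<le> size (filter_mset (\<lambda>\<sigma>. \<not> enters \<sigma>) Au)"
    by (rule count_le_size)
  finally show ?thesis
    using leaving by linarith
qed

subsection \<open>Linear algebra over \<open>\<rat>\<close>\<close>

definition lin_indep_set :: "('c \<Rightarrow> 'a \<Rightarrow> rat) \<Rightarrow> 'c set \<Rightarrow> bool" where
  "lin_indep_set vec Y \<longleftrightarrow> (\<forall>c. (\<forall>x. (\<Sum>C\<in>Y. c C * vec C x) = 0) \<longrightarrow> (\<forall>C\<in>Y. c C = 0))"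

lemma sum_fun_apply: "(\<Sum>i\<in>I. (f i :: 'a \<Rightarrow> 'b::comm_monoid_add)) x = (\<Sum>i\<in>I. f i x)"
  by (induction I rule: infinite_finite_induct) (auto simp: zero_fun_def plus_fun_def)

lemma conic_combination_drop_one:
  fixes vec :: "'c \<Rightarrow> 'a \<Rightarrow> rat"
  assumes X: "finite X" and \<beta>: "\<forall>C\<in>X. \<beta> C \<ge> 0" and w: "\<forall>x. w x = (\<Sum>C\<in>X. \<beta> C * vec C x)"
    and dep: "\<not> lin_indep_set vec X"
  obtains C0 \<beta>' where "C0 \<in> X" "\<forall>C\<in>X. \<beta>' C \<ge> 0"
    "\<forall>x. w x = (\<Sum>C\<in>X - {C0}. \<beta>' C * vec C x)"
proof -
  obtain c C1 where c: "\<forall>x. (\<Sum>C\<in>X. c C * vec C x) = 0" "C1 \<in> X" "c C1 \<noteq> 0"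
    using dep unfolding lin_indep_set_def by blast
  define d where "d = (if c C1 > 0 then c else (\<lambda>C. - c C))"
  have d0: "\<forall>x. (\<Sum>C\<in>X. d C * vec C x) = 0"
    using c(1) by (simp add: d_def sum_negf)
  define Pos where "Pos = {C\<in>X. d C > 0}"
  have Pos: "finite Pos" "Pos \<noteq> {}"
    using X c(2,3) by (auto simp: Pos_def d_def)
  \<comment> \<open>move along the relation \<open>d\<close> until the first coefficient vanishes\<close>
  define t where "t = Min ((\<lambda>C. \<beta> C / d C) ` Pos)"
  have "t \<in> (\<lambda>C. \<beta> C / d C) ` Pos"
    unfolding t_def using Pos by (intro Min_in) auto
  then obtain C0 where C0: "C0 \<in> Pos" "t = \<beta> C0 / d C0"
    by blast
  have t_le: "t \<le> \<beta> C / d C" if "C \<in> Pos" for C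
    unfolding t_def using Pos that by auto
  have t0: "t \<ge> 0"
    using C0 \<beta> by (auto simp: Pos_def)
  define \<beta>' where "\<beta>' = (\<lambda>C. \<beta> C - t * d C)"
  have "\<beta>' C \<ge> 0" if C: "C \<in> X" for C
  proof (cases "d C > 0")
    case True
    then have "t * d C \<le> \<beta> C"
      using t_le C by (simp add: Pos_def pos_le_divide_eq)
    then show ?thesis by (simp add: \<beta>'_def)
  next
    case False
    then have "t * d C \<le> 0"
      using t0 by (simp add: mult_nonneg_nonpos)
    moreover have "\<beta> C \<ge> 0"
      using \<beta> C by blast
    ultimately show ?thesis
      by (simp add: \<beta>'_def)
  qed
  moreover have "w x = (\<Sum>C\<in>X - {C0}. \<beta>' C * vec C x)" for x
  proof -
    have "(\<Sum>C\<in>X. \<beta>' C * vec C x) = (\<Sum>C\<in>X. \<beta> C * vec C x) - t * (\<Sum>C\<in>X. d C * vec C x)"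
      by (simp add: \<beta>'_def algebra_simps sum_subtractf sum_distrib_left)
    moreover have "\<beta>' C0 = 0"
      using C0 by (auto simp: \<beta>'_def Pos_def)
    moreover have "C0 \<in> X"
      using C0 by (simp add: Pos_def)
    ultimately show ?thesis
      using d0 w X by (simp add: sum.remove)
  qed
  moreover have "C0 \<in> X"
    using C0 by (simp add: Pos_def)
  ultimately show ?thesis
    using that by blast
qed

lemma conic_caratheodory:
  fixes vec :: "'c \<Rightarrow> 'a \<Rightarrow> rat"
  assumes "finite X" "\<forall>C\<in>X. \<beta> C \<ge> 0" "\<forall>x. w x = (\<Sum>C\<in>X. \<beta> C * vec C x)"
  shows "\<exists>Y \<beta>'. Y \<subseteq> X \<and> (\<forall>C\<in>Y. \<beta>' C \<ge> 0) \<and> (\<forall>x. w x = (\<Sum>C\<in>Y. \<beta>' C * vec C x)) \<and>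
    lin_indep_set vec Y"
  using assms
proof (induction "card X" arbitrary: X \<beta> rule: less_induct)
  case less
  show ?case
  proof (cases "lin_indep_set vec X")
    case True
    then show ?thesis using less.prems by blast
  next
    case False
    then obtain C0 \<beta>' where C0: "C0 \<in> X" "\<forall>C\<in>X. \<beta>' C \<ge> 0"
      "\<forall>x. w x = (\<Sum>C\<in>X - {C0}. \<beta>' C * vec C x)"
      using conic_combination_drop_one less.prems by blast
    have "card (X - {C0}) < card X"
      using C0(1) less.prems(1) by (meson card_Diff1_less)
    from less.hyps[OF this _ _ C0(3)] C0(2) less.prems(1)
    obtain Y \<beta>'' where "Y \<subseteq> X - {C0}" "\<forall>C\<in>Y. \<beta>'' C \<ge> 0"
      "\<forall>x. w x = (\<Sum>C\<in>Y. \<beta>'' C * vec C x)" "lin_indep_set vec Y"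
      by auto
    then show ?thesis by blast
  qed
qed

lemma lin_indep_set_inj_on:
  fixes vec :: "'c \<Rightarrow> 'a \<Rightarrow> rat"
  assumes "finite Y" "lin_indep_set vec Y"
  shows "inj_on vec Y"
proof
  fix C1 C2 assume C: "C1 \<in> Y" "C2 \<in> Y" "vec C1 = vec C2"
  show "C1 = C2"
  proof (rule ccontr)
    assume ne: "C1 \<noteq> C2"
    define c where "c = (\<lambda>C. if C = C1 then (1::rat) else if C = C2 then -1 else 0)"
    have "\<forall>x. (\<Sum>C\<in>Y. c C * vec C x) = 0"
    proof
      fix x
      have "(\<Sum>C\<in>Y. c C * vec C x) = (\<Sum>C\<in>{C1,C2}. c C * vec C x)"
        using C assms(1) by (intro sum.mono_neutral_right) (auto simp: c_def)
      also have "\<dots> = 0" using ne C(3) by (simp add: c_def)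
      finally show "(\<Sum>C\<in>Y. c C * vec C x) = 0" .
    qed
    with assms(2) C(1) have "c C1 = 0" unfolding lin_indep_set_def by blast
    then show False by (simp add: c_def)
  qed
qed

interpretation rat_fun: vector_space "\<lambda>(r::rat) (f::'a \<Rightarrow> rat) x. r * f x"
  by unfold_locales (auto simp: fun_eq_iff algebra_simps plus_fun_def)

lemma independent_image_if_lin_indep_set:
  fixes vec :: "'c \<Rightarrow> 'a \<Rightarrow> rat"
  assumes Y: "finite Y" and ind: "lin_indep_set vec Y"
  shows "rat_fun.independent (vec ` Y)"
proof (rule rat_fun.independent_if_scalars_zero)
  show "finite (vec ` Y)"
    using Y by simp
next
  fix f v
  assume zero: "(\<Sum>u\<in>vec ` Y. (\<lambda>x. f u * u x)) = 0" and v: "v \<in> vec ` Y"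
  have inj: "inj_on vec Y"
    using lin_indep_set_inj_on[OF Y ind] .
  have zero': "\<forall>x. (\<Sum>C\<in>Y. f (vec C) * vec C x) = 0"
  proof
    fix x
    have "(\<Sum>C\<in>Y. f (vec C) * vec C x) = (\<Sum>u\<in>vec ` Y. (\<lambda>x. f u * u x)) x"
      using inj by (simp add: sum.reindex sum_fun_apply)
    then show "(\<Sum>C\<in>Y. f (vec C) * vec C x) = 0"
      using zero by simp
  qed
  from ind have "(\<forall>x. (\<Sum>C\<in>Y. f (vec C) * vec C x) = 0) \<longrightarrow> (\<forall>C\<in>Y. f (vec C) = 0)"
    unfolding lin_indep_set_def by (rule spec[where x = "\<lambda>C. f (vec C)"])
  with zero' have "\<forall>C\<in>Y. f (vec C) = 0"
    by blast
  then show "f v = 0"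
    using v by blast
qed

lemma in_span_unit_vectors:
  fixes v :: "'a \<Rightarrow> rat"
  assumes T: "finite T" and v: "\<forall>x. x \<notin> T \<longrightarrow> v x = 0"
  shows "v \<in> rat_fun.span ((\<lambda>t x. if x = t then 1 else 0) ` T)"
proof -
  have "v = (\<Sum>t\<in>T. (\<lambda>x. v t * (if x = t then 1 else 0)))"
  proof
    fix x
    have "(\<Sum>t\<in>T. (\<lambda>x. v t * (if x = t then 1 else 0))) x = (\<Sum>t\<in>T. if t = x then v t else 0)"
      by (auto simp: sum_fun_apply intro: sum.cong)
    then show "v x = (\<Sum>t\<in>T. (\<lambda>x. v t * (if x = t then 1 else 0))) x"
      using T v by simp
  qed
  also have "\<dots> \<in> rat_fun.span ((\<lambda>t x. if x = t then 1 else 0) ` T)"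
    by (intro rat_fun.span_sum rat_fun.span_scale rat_fun.span_base) auto
  finally show ?thesis .
qed

lemma card_le_if_lin_indep_set:
  fixes vec :: "'c \<Rightarrow> 'a \<Rightarrow> rat"
  assumes T: "finite T" and Y: "finite Y" and ind: "lin_indep_set vec Y"
    and supp: "\<forall>C\<in>Y. \<forall>x. x \<notin> T \<longrightarrow> vec C x = 0"
  shows "card Y \<le> card T"
proof -
  have "card Y = card (vec ` Y)"
    using lin_indep_set_inj_on[OF Y ind] by (simp add: card_image)
  also have "\<dots> \<le> card ((\<lambda>t x. if x = t then (1::rat) else 0) ` T)"
    using rat_fun.independent_span_bound[OF _ independent_image_if_lin_indep_set[OF Y ind]]
      in_span_unit_vectors[OF T] supp T by blast
  also have "\<dots> \<le> card T"
    using T by (rule card_image_le)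
  finally show ?thesis .
qed

subsection \<open>Runs and cycles\<close>

lemma is_cycle_balanced: "is_cycle \<delta> C \<Longrightarrow> source_of C = target_of C"
  by (auto simp: is_cycle_def cycle_from_def)

lemma simple_cycles_balanced:
  "C \<in> simple_cycles_from \<delta> T \<Longrightarrow> source_of C = target_of C \<and> set_mset C \<subseteq> \<delta>"
  unfolding simple_cycles_from_def cycle_from_def by blast

lemma run_add_cycle:
  assumes run: "is_run \<delta> s0 D" and C: "cycle_from \<delta> C s" and s: "s \<in> supp D"
  shows "is_run \<delta> s0 (D + repeat_mset n C)"
proof (cases "n = 0")
  case True
  then show ?thesis using run by simp
next
  case False
  define D' where "D' = D + repeat_mset n C"
  have "set_mset (repeat_mset n C) = set_mset C"
    using False by (simp add: set_eq_iff flip: count_greater_zero_iff)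
  then have set_D': "set_mset D' = set_mset D \<union> set_mset C"
    by (simp add: D'_def)
  have conn_D: "connected_from D s0" and conn_C: "connected_from C s"
    and bal_C: "source_of C = target_of C"
    using run C by (auto simp: is_run_def cycle_from_def)
  have reach_s: "s = s0 \<or> (\<exists>ws. walk D' ws s0 s)"
    using conn_D s set_D' walk_mono unfolding connected_from_iff_walk by blast
  have "connected_from D' s0"
    unfolding connected_from_iff_walk
  proof
    fix t
    assume "t \<in> supp D'"
    then consider "t \<in> supp D" | "t \<in> supp C"
      using set_D' by (auto simp: supp_eq_image_src)
    then show "t = s0 \<or> (\<exists>ws. walk D' ws s0 t)"
    proof cases
      case 1
      then show ?thesis
        using conn_D set_D' walk_mono unfolding connected_from_iff_walk by blast
    next
      case 2
      then have "t = s \<or> (\<exists>ws. walk D' ws s t)"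
        using conn_C set_D' walk_mono unfolding connected_from_iff_walk by blast
      then show ?thesis
        using reach_s walk_append by blast
    qed
  qed
  moreover have "set_mset D' \<subseteq> \<delta>"
    using set_D' run C by (auto simp: is_run_def cycle_from_def)
  moreover have "source_of D' = target_of D' + {#s0#}"
    using run bal_C by (simp add: D'_def is_run_def)
  ultimately show ?thesis
    by (simp add: is_run_def D'_def)
qed

lemma run_add_cycles:
  assumes run: "is_run \<delta> s0 D" and Cs: "\<forall>C\<in>set Cs. C \<in> simple_cycles_from \<delta> (supp D)"
  shows "m \<le> length Cs \<Longrightarrow> is_run \<delta> s0 (D + (\<Sum>i<m. repeat_mset (\<alpha> i) (Cs ! i)))"
proof (induction m)
  case 0
  then show ?case using run by simp
next
  case (Suc m)
  then have run_m: "is_run \<delta> s0 (D + (\<Sum>i<m. repeat_mset (\<alpha> i) (Cs ! i)))"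
    by simp
  have "Cs ! m \<in> simple_cycles_from \<delta> (supp D)"
    using Cs Suc.prems by simp
  then obtain s where s: "s \<in> supp D" "cycle_from \<delta> (Cs ! m) s"
    by (auto simp: simple_cycles_from_def)
  then have "s \<in> supp (D + (\<Sum>i<m. repeat_mset (\<alpha> i) (Cs ! i)))"
    by (auto simp: supp_eq_image_src)
  from run_add_cycle[OF run_m s(2) this, of "\<alpha> m"] show ?case
    by (simp add: add.assoc)
qed

lemma in_out_lang_if_decomposition:
  assumes run: "is_run \<delta> s0 D" and Cs: "\<forall>C\<in>set Cs. C \<in> simple_cycles_from \<delta> (supp D)"
  shows "out_of D + (\<Sum>i<length Cs. repeat_mset (\<alpha> i) (out_of (Cs ! i))) \<in> out_lang \<delta> s0"
proof -
  have "is_run \<delta> s0 (D + (\<Sum>i<length Cs. repeat_mset (\<alpha> i) (Cs ! i)))"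
    using run_add_cycles[OF run Cs] by simp
  then show ?thesis
    unfolding out_lang_def by (force simp: out_of_sum)
qed

lemma run_if_balanced:
  assumes reg: "regular_trans (set_mset M)" and M: "set_mset M \<subseteq> \<delta>"
    and bal: "source_of M = target_of M + {#s0#}"
  shows "is_run \<delta> s0 (filter_mset (\<lambda>\<tau>. (s0, src \<tau>) \<in> (edges M)\<^sup>*) M)"
  using reachable_part_balanced_connected[OF reg bal] M by (auto simp: is_run_def)

text \<open>A run of minimal size contains no cycle, so its transitions occur at most once.\<close>

lemma run_with_counts_le_one:
  assumes reg: "regular_trans \<delta>" and R: "is_run \<delta> s0 R"
  obtains D where "is_run \<delta> s0 D" "\<forall>\<tau>. count D \<tau> \<le> 1"
proof -
  obtain D where D: "is_run \<delta> s0 D" and min: "\<And>D'. is_run \<delta> s0 D' \<Longrightarrow> size D \<le> size D'"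
    using ex_has_least_nat[of "is_run \<delta> s0" R size] R by blast
  have D\<delta>: "set_mset D \<subseteq> \<delta>" and bal: "source_of D = target_of D + {#s0#}"
    using D by (auto simp: is_run_def)
  have reg_D: "regular_trans (set_mset D)"
    using reg D\<delta> by (rule regular_trans_subset)
  have "acyclic (edges D)"
  proof (rule ccontr)
    assume "\<not> acyclic (edges D)"
    then obtain C where C: "simple_cycle \<delta> C" "C \<subseteq># mset_set (set_mset D)"
      using simple_cycle_if_not_acyclic[OF reg_D D\<delta>] by blast
    have CD: "C \<subseteq># D"
      using C(2) mset_set_set_mset_msubset by (rule subset_mset.order_trans)
    have "C \<noteq> {#}" and bal_C: "source_of C = target_of C"
      using C(1) by (auto simp: simple_cycle_def intro: is_cycle_balanced)
    have DC: "D = (D - C) + C"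
      using CD by simp
    have bal': "source_of (D - C) = target_of (D - C) + {#s0#}"
      using bal bal_C DC
      by (metis add.commute add.left_commute add_right_cancel source_of_union target_of_union)
    have sub: "set_mset (D - C) \<subseteq> set_mset D"
      by (auto dest: in_diffD)
    have "is_run \<delta> s0 (filter_mset (\<lambda>\<tau>. (s0, src \<tau>) \<in> (edges (D - C))\<^sup>*) (D - C))"
      using run_if_balanced[OF regular_trans_subset[OF reg_D sub] _ bal'] sub D\<delta> by blast
    then have "size D \<le> size (D - C)"
      using min size_filter_mset_lesseq order_trans by blast
    moreover have "size (D - C) < size D"
      using DC \<open>C \<noteq> {#}\<close> by (metis less_add_same_cancel1 nonempty_has_size size_union)
    ultimately show False
      by simp
  qed
  then have "\<forall>\<tau>. count D \<tau> \<le> 1"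
    using count_le_size_if_acyclic[OF reg_D, of "{#}" "{#s0#}"] bal by simp
  with D show ?thesis
    using that by blast
qed

subsection \<open>Decomposing a run\<close>

text \<open>The excess of a run \<open>D\<close> is \<open>D - mset_set (set_mset D)\<close>.\<close>

lemma run_diff_cycle_in_excess:
  assumes run: "is_run \<delta> s0 D" and C: "C \<subseteq># D - mset_set (set_mset D)"
    and bal_C: "source_of C = target_of C"
  shows "is_run \<delta> s0 (D - C)" and "set_mset (D - C) = set_mset D"
proof -
  have CD: "C \<subseteq># D"
    using C by (meson diff_subset_eq_self subset_mset.order_trans)
  show set_eq: "set_mset (D - C) = set_mset D"
  proof
    show "set_mset (D - C) \<subseteq> set_mset D"
      by (auto dest: in_diffD)
    show "set_mset D \<subseteq> set_mset (D - C)"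
    proof
      fix \<tau>
      assume "\<tau> \<in># D"
      then have "count C \<tau> \<le> count D \<tau> - 1" and "0 < count D \<tau>"
        using mset_subset_eq_count[OF C, of \<tau>] by (simp_all add: count_mset_set')
      then have "count C \<tau> < count D \<tau>"
        by linarith
      then show "\<tau> \<in># D - C"
        by (simp add: in_diff_count)
    qed
  qed
  have DC: "D = (D - C) + C"
    using CD by simp
  have "source_of (D - C) = target_of (D - C) + {#s0#}"
    using run bal_C DC unfolding is_run_def
    by (metis add.commute add.left_commute add_right_cancel source_of_union target_of_union)
  with run set_eq show "is_run \<delta> s0 (D - C)"
    using connected_from_cong[of D "D - C" s0] by (auto simp: is_run_def)
qed

text \<open>
  In the balance equation of the run, the support contributes at most \<open>card \<delta>\<close> transitions,
  so an acyclic excess occurs at most \<open>card \<delta> + 1\<close> times per transition.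
\<close>

lemma count_le_if_excess_acyclic:
  assumes reg: "regular_trans \<delta>" and fin: "finite \<delta>" and run: "is_run \<delta> s0 D"
    and acyc: "acyclic (edges (D - mset_set (set_mset D)))"
  shows "count D \<tau> \<le> card \<delta> + 2"
proof -
  define SD where "SD = mset_set (set_mset D)"
  define A where "A = D - SD"
  have "SD \<subseteq># D"
    unfolding SD_def by (rule mset_set_set_mset_msubset)
  then have DA: "D = A + SD"
    by (simp add: A_def)
  have D\<delta>: "set_mset D \<subseteq> \<delta>"
    using run by (simp add: is_run_def)
  then have reg_A: "regular_trans (set_mset A)" and reg_SD: "regular_trans (set_mset SD)"
    using reg DA by (auto intro: regular_trans_subset)
  have "source_of A + source_of SD = target_of A + (target_of SD + {#s0#})"
    using run by (simp add: is_run_def DA add.assoc)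
  then have "count A \<tau> \<le> size (target_of SD + {#s0#})"
    using count_le_size_if_acyclic[OF reg_A] acyc unfolding A_def SD_def by blast
  also have "\<dots> \<le> size SD + 1"
    using size_target_of_le[OF reg_SD] by simp
  also have "\<dots> \<le> card \<delta> + 1"
    unfolding SD_def using D\<delta> fin by (simp add: card_mono)
  finally have "count A \<tau> \<le> card \<delta> + 1" .
  moreover have "count SD \<tau> \<le> 1"
    by (simp add: SD_def count_mset_set')
  ultimately show ?thesis
    using arg_cong[OF DA, of "\<lambda>M. count M \<tau>"] by simp
qed

lemma simple_cycle_in_excess:
  assumes reg: "regular_trans \<delta>" and run: "is_run \<delta> s0 D"
    and cyclic: "\<not> acyclic (edges (D - mset_set (set_mset D)))"
  obtains C where "C \<in> simple_cycles_from \<delta> (supp D)" "\<forall>\<tau>. count C \<tau> \<le> 1"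
    "C \<subseteq># D - mset_set (set_mset D)"
proof -
  define A where "A = D - mset_set (set_mset D)"
  have AD: "set_mset A \<subseteq> set_mset D"
    by (auto simp: A_def dest: in_diffD)
  moreover have "set_mset D \<subseteq> \<delta>"
    using run by (simp add: is_run_def)
  ultimately have reg_A: "regular_trans (set_mset A)" and A\<delta>: "set_mset A \<subseteq> \<delta>"
    using reg by (auto intro: regular_trans_subset)
  obtain C where C: "simple_cycle \<delta> C" "C \<subseteq># mset_set (set_mset A)"
    using simple_cycle_if_not_acyclic[OF reg_A A\<delta>] cyclic by (auto simp: A_def)
  have CA: "C \<subseteq># A"
    using C(2) mset_set_set_mset_msubset by (rule subset_mset.order_trans)
  have C_ne: "C \<noteq> {#}" and "is_cycle \<delta> C"
    using C(1) by (auto simp: simple_cycle_def)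
  then obtain s where s: "cycle_from \<delta> C s"
    by (auto simp: is_cycle_def)
  have "s \<in> supp D"
    using cycle_from_in_supp[OF s C_ne] set_mset_mono[OF CA] AD by (auto simp: supp_eq_image_src)
  with C(1) s have "C \<in> simple_cycles_from \<delta> (supp D)"
    by (auto simp: simple_cycles_from_def)
  moreover have "count C \<tau> \<le> 1" for \<tau>
    using mset_subset_eq_count[OF C(2), of \<tau>] by (simp add: count_mset_set' split: if_splits)
  ultimately show ?thesis
    using that CA by (simp add: A_def)
qed

text \<open>Peel simple cycles off the excess for as long as it is not acyclic.\<close>

lemma run_decomposition:
  assumes reg: "regular_trans \<delta>" and fin: "finite \<delta>" and R: "is_run \<delta> s0 R"
  obtains D Cs where "is_run \<delta> s0 D" "set_mset D = set_mset R"
    "\<forall>C\<in>set Cs. C \<in> simple_cycles_from \<delta> (supp R) \<and> (\<forall>\<tau>. count C \<tau> \<le> 1)"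
    "R = D + sum_list Cs" "\<forall>\<tau>. count D \<tau> \<le> card \<delta> + 2"
proof -
  define P where "P = (\<lambda>D. is_run \<delta> s0 D \<and> set_mset D = set_mset R \<and>
     (\<exists>Cs. (\<forall>C\<in>set Cs. C \<in> simple_cycles_from \<delta> (supp R) \<and> (\<forall>\<tau>. count C \<tau> \<le> 1)) \<and>
       R = D + sum_list Cs))"
  have "P R"
    using R unfolding P_def by (intro conjI exI[of _ "[]"]) auto
  then obtain D where PD: "P D" and min: "\<And>D'. P D' \<Longrightarrow> size D \<le> size D'"
    using ex_has_least_nat[of P R size] by blast
  from PD obtain Cs where D: "is_run \<delta> s0 D" "set_mset D = set_mset R"
    and Cs: "\<forall>C\<in>set Cs. C \<in> simple_cycles_from \<delta> (supp R) \<and> (\<forall>\<tau>. count C \<tau> \<le> 1)"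
    and RD: "R = D + sum_list Cs"
    unfolding P_def by blast
  have "acyclic (edges (D - mset_set (set_mset D)))"
  proof (rule ccontr)
    assume "\<not> acyclic (edges (D - mset_set (set_mset D)))"
    then obtain C where C: "C \<in> simple_cycles_from \<delta> (supp R)" "\<forall>\<tau>. count C \<tau> \<le> 1"
      "C \<subseteq># D - mset_set (set_mset D)"
      using simple_cycle_in_excess[OF reg D(1)] D(2) by (metis supp_eq_image_src)
    have CD: "C \<subseteq># D"
      using C(3) by (meson diff_subset_eq_self subset_mset.order_trans)
    have "is_run \<delta> s0 (D - C)" "set_mset (D - C) = set_mset D"
      using run_diff_cycle_in_excess[OF D(1) C(3)] simple_cycles_balanced[OF C(1)] by simp_all
    moreover have "R = (D - C) + sum_list (C # Cs)"
      using RD CD by (metis add.assoc subset_mset.diff_add sum_list.Cons)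
    ultimately have "P (D - C)"
      using C(1,2) Cs D(2) unfolding P_def by (intro conjI exI[of _ "C # Cs"]) auto
    then have "size D \<le> size (D - C)"
      by (rule min)
    moreover have "size D = size (D - C) + size C"
      using CD by (metis size_union subset_mset.diff_add)
    moreover have "C \<noteq> {#}"
      using C(1) by (simp add: simple_cycles_from_def simple_cycle_def)
    ultimately show False
      by (simp add: nonempty_has_size)
  qed
  then have "\<forall>\<tau>. count D \<tau> \<le> card \<delta> + 2"
    using count_le_if_excess_acyclic[OF reg fin D(1)] by blast
  with D Cs RD show ?thesis
    using that by blast
qed

lemma sum_nth_eq_sum_set:
  assumes "distinct xs"
  shows "(\<Sum>i<length xs. f (xs ! i)) = (\<Sum>x\<in>set xs. f x)"
proof -
  have "nth xs ` {..<length xs} = set xs"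
    by (auto simp: set_conv_nth)
  then show ?thesis
    using sum.reindex[OF inj_on_nth[OF assms, of "{..<length xs}"], of f] by simp
qed

lemma count_sum_list:
  "count (sum_list Cs) \<tau> = (\<Sum>C\<in>set Cs. count (mset Cs) C * count C \<tau>)"
proof (induction Cs)
  case Nil
  then show ?case by simp
next
  case (Cons C Cs)
  have split: "count (mset (C # Cs)) C' * count C' \<tau> =
      count (mset Cs) C' * count C' \<tau> + (if C' = C then count C' \<tau> else 0)" for C'
    by auto
  have "(\<Sum>C'\<in>set (C # Cs). count (mset (C # Cs)) C' * count C' \<tau>) =
      (\<Sum>C'\<in>insert C (set Cs). count (mset Cs) C' * count C' \<tau>) +
      (\<Sum>C'\<in>insert C (set Cs). if C' = C then count C' \<tau> else 0)"
    unfolding split by (simp add: sum.distrib)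
  also have "(\<Sum>C'\<in>insert C (set Cs). count (mset Cs) C' * count C' \<tau>) =
      (\<Sum>C'\<in>set Cs. count (mset Cs) C' * count C' \<tau>)"
    by (simp add: sum.insert_if count_mset_0_iff)
  also have "(\<Sum>C'\<in>insert C (set Cs). if C' = C then count C' \<tau> else 0) = count C \<tau>"
    by (simp add: sum.delta)
  finally show ?case
    using Cons by simp
qed

lemma lin_indep_if_lin_indep_set:
  assumes xs: "distinct xs" and ind: "lin_indep_set (\<lambda>C \<tau>. of_nat (count C \<tau>)) (set xs)"
  shows "lin_indep xs"
  unfolding lin_indep_def
proof (intro allI impI)
  fix c :: "nat \<Rightarrow> rat" and i
  assume zero: "\<forall>\<tau>. (\<Sum>i<length xs. c i * of_nat (count (xs ! i) \<tau>)) = 0" and i: "i < length xs"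
  define c' where "c' = (\<lambda>C. c (the_inv_into {..<length xs} (nth xs) C))"
  have c': "c' (xs ! j) = c j" if "j < length xs" for j
    unfolding c'_def using that inj_on_nth[OF xs, of "{..<length xs}"] by (simp add: the_inv_into_f_f)
  have "(\<Sum>C\<in>set xs. c' C * of_nat (count C \<tau>)) = 0" for \<tau>
  proof -
    have "(\<Sum>C\<in>set xs. c' C * of_nat (count C \<tau>)) = (\<Sum>j<length xs. c' (xs ! j) * of_nat (count (xs ! j) \<tau>))"
      by (rule sum_nth_eq_sum_set[OF xs, symmetric])
    also have "\<dots> = (\<Sum>j<length xs. c j * of_nat (count (xs ! j) \<tau>))"
      by (rule sum.cong) (simp_all add: c')
    finally show ?thesis
      using spec[OF zero, of \<tau>] by simp
  qed
  with ind have "\<forall>C\<in>set xs. c' C = 0"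
    unfolding lin_indep_set_def by blast
  then show "c i = 0"
    using c' i by (metis nth_mem)
qed

lemma floor_combination:
  fixes W :: "'a multiset" and \<beta> :: "'a multiset \<Rightarrow> rat"
  assumes Y: "finite Y" and \<beta>: "\<forall>C\<in>Y. \<beta> C \<ge> 0" and ones: "\<forall>C\<in>Y. \<forall>x. count C x \<le> 1"
    and W: "\<forall>x. of_nat (count W x) = (\<Sum>C\<in>Y. \<beta> C * of_nat (count C x))"
  defines "G \<equiv> \<Sum>C\<in>Y. repeat_mset (nat \<lfloor>\<beta> C\<rfloor>) C"
  shows "G \<subseteq># W" and "count W x \<le> count G x + card Y"
proof -
  have frac: "of_nat (count W x) - of_nat (count G x) = (\<Sum>C\<in>Y. (\<beta> C - of_int \<lfloor>\<beta> C\<rfloor>) * of_nat (count C x))"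
    for x
  proof -
    have "(of_nat (count G x) :: rat) = (\<Sum>C\<in>Y. of_int \<lfloor>\<beta> C\<rfloor> * of_nat (count C x))"
      using \<beta> by (simp add: G_def count_sum)
    then show ?thesis
      using W by (simp add: left_diff_distrib sum_subtractf)
  qed
  have "(0::rat) \<le> of_nat (count W x) - of_nat (count G x)" for x
    unfolding frac by (intro sum_nonneg mult_nonneg_nonneg) auto
  then show "G \<subseteq># W"
    by (intro mset_subset_eqI) simp
  have "(\<Sum>C\<in>Y. (\<beta> C - of_int \<lfloor>\<beta> C\<rfloor>) * of_nat (count C x)) \<le> of_nat (card Y) * (1::rat)"
  proof (rule sum_bounded_above)
    fix C
    assume "C \<in> Y"
    then have "of_nat (count C x) \<le> (1::rat)"
      using ones by simp
    moreover have "\<beta> C - of_int \<lfloor>\<beta> C\<rfloor> \<le> 1" "0 \<le> \<beta> C - of_int \<lfloor>\<beta> C\<rfloor>"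
      by linarith+
    ultimately show "(\<beta> C - of_int \<lfloor>\<beta> C\<rfloor>) * of_nat (count C x) \<le> 1"
      by (simp add: mult_le_one)
  qed
  then have "(of_nat (count W x) :: rat) \<le> of_nat (count G x + card Y)"
    using frac[of x] by simp
  then show "count W x \<le> count G x + card Y"
    by (simp only: of_nat_le_iff)
qed

lemma sum_simple_cycles_decomposition:
  assumes fin: "finite \<delta>"
    and Cs: "\<forall>C\<in>set Cs. C \<in> simple_cycles_from \<delta> T \<and> (\<forall>\<tau>. count C \<tau> \<le> 1)"
  obtains xs \<alpha> F where "\<forall>C\<in>set xs. C \<in> simple_cycles_from \<delta> T" "lin_indep xs"
    "sum_list Cs = F + (\<Sum>i<length xs. repeat_mset (\<alpha> i) (xs ! i))"
    "source_of F = target_of F" "\<forall>\<tau>. count F \<tau> \<le> card \<delta>"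
proof -
  define vec where "vec = (\<lambda>(C :: trans multiset) \<tau>. (of_nat (count C \<tau>) :: rat))"
  define W where "W = sum_list Cs"
  have "\<forall>\<tau>. of_nat (count W \<tau>) = (\<Sum>C\<in>set Cs. of_nat (count (mset Cs) C) * vec C \<tau>)"
    by (simp add: W_def vec_def count_sum_list)
  then obtain Y \<beta> where Y: "Y \<subseteq> set Cs" "\<forall>C\<in>Y. \<beta> C \<ge> 0"
    "\<forall>\<tau>. of_nat (count W \<tau>) = (\<Sum>C\<in>Y. \<beta> C * vec C \<tau>)" "lin_indep_set vec Y"
    using conic_caratheodory[of "set Cs" "\<lambda>C. of_nat (count (mset Cs) C)" "\<lambda>\<tau>. of_nat (count W \<tau>)" vec]
    by auto
  have fin_Y: "finite Y"
    using Y(1) finite_subset by blast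
  have Y_Cs: "C \<in> simple_cycles_from \<delta> T" "\<forall>\<tau>. count C \<tau> \<le> 1" if "C \<in> Y" for C
    using that Y(1) Cs by blast+
  have card_Y: "card Y \<le> card \<delta>"
    using card_le_if_lin_indep_set[OF fin fin_Y Y(4)] Y_Cs simple_cycles_balanced
    by (fastforce simp: vec_def not_in_iff)
  obtain xs where xs: "set xs = Y" "distinct xs"
    using finite_distinct_list[OF fin_Y] by blast
  define \<alpha> where "\<alpha> = (\<lambda>i. nat \<lfloor>\<beta> (xs ! i)\<rfloor>)"
  define G where "G = (\<Sum>C\<in>Y. repeat_mset (nat \<lfloor>\<beta> C\<rfloor>) C)"
  have G: "G = (\<Sum>i<length xs. repeat_mset (\<alpha> i) (xs ! i))"
    using sum_nth_eq_sum_set[OF xs(2), of "\<lambda>C. repeat_mset (nat \<lfloor>\<beta> C\<rfloor>) C"] xs(1)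
    by (simp add: G_def \<alpha>_def)
  have ones: "\<forall>C\<in>Y. \<forall>\<tau>. count C \<tau> \<le> 1"
    using Y_Cs by blast
  have GW: "G \<subseteq># W" and count_W: "\<And>\<tau>. count W \<tau> \<le> count G \<tau> + card Y"
    using floor_combination[OF fin_Y Y(2) ones Y(3)[unfolded vec_def]] unfolding G_def by blast+
  define F where "F = W - G"
  have WFG: "W = F + G"
    unfolding F_def using GW by (rule subset_mset.diff_add[symmetric])
  have "map source_of Cs = map target_of Cs"
    by (rule map_cong[OF refl]) (use Cs simple_cycles_balanced in blast)
  then have "source_of W = target_of W"
    unfolding W_def source_of_sum_list target_of_sum_list by (rule arg_cong)
  moreover have "source_of G = target_of G"
    unfolding G_def source_of_sum target_of_sum
    using Y_Cs(1) simple_cycles_balanced by (metis (no_types, lifting) sum.cong source_of_repeat_mset target_of_repeat_mset)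
  ultimately have "source_of F = target_of F"
    using WFG by (metis add_right_cancel source_of_union target_of_union)
  moreover have "\<forall>\<tau>. count F \<tau> \<le> card \<delta>"
    using count_W card_Y by (metis F_def count_diff le_diff_conv add.commute le_trans)
  moreover have "lin_indep xs"
    using lin_indep_if_lin_indep_set xs Y(4) by (simp add: vec_def)
  moreover have "\<forall>C\<in>set xs. C \<in> simple_cycles_from \<delta> T"
    using xs(1) Y_Cs by blast
  moreover have "sum_list Cs = F + (\<Sum>i<length xs. repeat_mset (\<alpha> i) (xs ! i))"
    using WFG G by (simp add: W_def)
  ultimately show ?thesis
    using that by blast
qed

lemma small_run_decomposition:
  assumes reg: "regular_trans \<delta>" and fin: "finite \<delta>" and R: "is_run \<delta> s0 R"
  obtains D Cs \<alpha> where "is_run \<delta> s0 D" "\<forall>\<tau>. count D \<tau> \<le> 2 * card \<delta> + 2"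
    "\<forall>C\<in>set Cs. C \<in> simple_cycles_from \<delta> (supp D)" "lin_indep Cs"
    "out_of R = out_of D + (\<Sum>i<length Cs. repeat_mset (\<alpha> i) (out_of (Cs ! i)))"
proof -
  obtain D Cs where D: "is_run \<delta> s0 D" "set_mset D = set_mset R"
    and Cs: "\<forall>C\<in>set Cs. C \<in> simple_cycles_from \<delta> (supp R) \<and> (\<forall>\<tau>. count C \<tau> \<le> 1)"
    and RD: "R = D + sum_list Cs" and count_D: "\<forall>\<tau>. count D \<tau> \<le> card \<delta> + 2"
    by (rule run_decomposition[OF reg fin R])
  obtain xs \<alpha> F where xs: "\<forall>C\<in>set xs. C \<in> simple_cycles_from \<delta> (supp R)" "lin_indep xs"
    and Cs_eq: "sum_list Cs = F + (\<Sum>i<length xs. repeat_mset (\<alpha> i) (xs ! i))"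
    and F: "source_of F = target_of F" "\<forall>\<tau>. count F \<tau> \<le> card \<delta>"
    by (rule sum_simple_cycles_decomposition[OF fin Cs])
  have "set_mset F \<subseteq> set_mset R"
    using RD Cs_eq by auto
  then have set_DF: "set_mset (D + F) = set_mset R"
    using D(2) by auto
  then have supp_DF: "supp (D + F) = supp R"
    by (simp add: supp_eq_image_src)
  have "is_run \<delta> s0 (D + F)"
    using D F(1) set_DF connected_from_cong[of D "D + F" s0] by (auto simp: is_run_def)
  moreover have "count (D + F) \<tau> \<le> 2 * card \<delta> + 2" for \<tau>
    using spec[OF count_D, of \<tau>] spec[OF F(2), of \<tau>] by simp
  moreover have "out_of R = out_of (D + F) + (\<Sum>i<length xs. repeat_mset (\<alpha> i) (out_of (xs ! i)))"
    using RD Cs_eq by (simp add: out_of_sum add.assoc)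
  ultimately show ?thesis
    using that xs supp_DF by simp
qed

subsection \<open>Counting transitions\<close>

lemma mset_size_le_one_cases:
  "size M \<le> 1 \<Longrightarrow> set_mset M \<subseteq> X \<Longrightarrow> M \<in> insert {#} ((\<lambda>x. {#x#}) ` X)"
  by (cases M) (auto simp: size_eq_0_iff_empty)

lemma card_transitions_le:
  assumes G: "regular_grammar \<Sigma> S s0 \<delta>"
  shows "card \<delta> \<le> card S * (card \<Sigma> + 1) * (card S + 1)"
proof -
  define singletons :: "nat set \<Rightarrow> nat multiset set" where
    "singletons X = insert {#} ((\<lambda>x. {#x#}) ` X)" for X
  have card_singletons: "card (singletons X) = card X + 1" if "finite X" for X
    using that by (auto simp: singletons_def card_insert_if card_image inj_on_def)
  have fin: "finite \<Sigma>" "finite S"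
    using G by (auto simp: regular_grammar_def comm_grammar_def)
  have "\<delta> \<subseteq> S \<times> singletons \<Sigma> \<times> singletons S"
  proof
    fix \<tau>
    assume "\<tau> \<in> \<delta>"
    then have "src \<tau> \<in> S" "set_mset (outp \<tau>) \<subseteq> \<Sigma>" "set_mset (tgt \<tau>) \<subseteq> S"
      "size (outp \<tau>) \<le> 1" "size (tgt \<tau>) \<le> 1"
      using G unfolding regular_grammar_def comm_grammar_def by blast+
    then have "outp \<tau> \<in> singletons \<Sigma>" "tgt \<tau> \<in> singletons S"
      unfolding singletons_def using mset_size_le_one_cases by blast+
    with \<open>src \<tau> \<in> S\<close> show "\<tau> \<in> S \<times> singletons \<Sigma> \<times> singletons S"
      by (cases \<tau>) (simp add: src_def outp_def tgt_def)
  qed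
  then have "card \<delta> \<le> card (S \<times> singletons \<Sigma> \<times> singletons S)"
    using fin by (intro card_mono) (auto simp: singletons_def)
  also have "\<dots> = card S * (card \<Sigma> + 1) * (card S + 1)"
    using fin by (simp add: card_cartesian_product card_singletons algebra_simps)
  finally show ?thesis .
qed

lemma quadratic_bound_le_power_fact:
  fixes a b :: nat
  assumes a: "a \<ge> 1" and b: "b \<ge> 1"
  shows "2 * (a * (b + 1) * (a + 1)) + 2 \<le> 12 * a ^ (2 * b) * fact b"
proof -
  have "1 \<le> a * a"
    using a by (simp add: one_le_mult_iff)
  then have "a + 1 \<le> 2 * a" and "1 \<le> a * a * (b + 1)"
    using a by (simp, metis le_add2 le_trans mult_le_mono2 nat_mult_1_right)
  then have "2 * (a * (b + 1) * (a + 1)) + 2 \<le> 2 * (a * (b + 1) * (2 * a)) + 2 * (a * a * (b + 1))"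
    by (intro add_mono mult_le_mono order.refl) auto
  also have "\<dots> = 6 * (a * a) * (b + 1)"
    by (simp add: algebra_simps)
  also have "\<dots> \<le> 6 * (a * a) * (2 * fact b)"
    using fact_ge_self[of b] b by (intro mult_le_mono2) linarith
  also have "\<dots> = 12 * a ^ 2 * fact b"
    by (simp add: power2_eq_square)
  also have "\<dots> \<le> 12 * a ^ (2 * b) * fact b"
    using a b by (simp add: power_increasing)
  finally show ?thesis .
qed

lemma out_lang_small_decomposition:
  assumes G: "regular_grammar \<Sigma> S s0 \<delta>" and K: "K \<in> out_lang \<delta> s0"
  shows "\<exists>D Cs (\<alpha> :: nat \<Rightarrow> nat). is_run \<delta> s0 D \<and>
    mnorm D \<le> 12 * card S ^ (2 * card \<Sigma>) * fact (card \<Sigma>) \<and>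
    (\<forall>C\<in>set Cs. C \<in> simple_cycles_from \<delta> (supp D)) \<and> lin_indep Cs \<and>
    K = out_of D + (\<Sum>i<length Cs. repeat_mset (\<alpha> i) (out_of (Cs ! i)))"
proof -
  obtain R where R: "is_run \<delta> s0 R" and KR: "K = out_of R"
    using K unfolding out_lang_def by blast
  have reg: "regular_trans \<delta>"
    using G by (rule regular_grammar_regular_trans)
  have fin: "finite \<delta>" "finite \<Sigma>" "finite S" "s0 \<in> S"
    and out_\<Sigma>: "\<forall>\<tau>\<in>\<delta>. set_mset (outp \<tau>) \<subseteq> \<Sigma>"
    using G by (auto simp: regular_grammar_def comm_grammar_def)
  show ?thesis
  proof (cases "\<Sigma> = {}")
    case True
    obtain D where D: "is_run \<delta> s0 D" "\<forall>\<tau>. count D \<tau> \<le> 1"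
      using run_with_counts_le_one[OF reg R] by blast
    have "set_mset (out_of R) \<subseteq> \<Sigma>" "set_mset (out_of D) \<subseteq> \<Sigma>"
      using R D(1) out_\<Sigma> by (auto simp: is_run_def intro!: set_mset_out_of_subset)
    with True KR have "K = out_of D"
      by simp
    moreover have "mnorm D \<le> 12 * card S ^ (2 * card \<Sigma>) * fact (card \<Sigma>)"
    proof (rule mnorm_le)
      fix \<tau>
      show "count D \<tau> \<le> 12 * card S ^ (2 * card \<Sigma>) * fact (card \<Sigma>)"
        using spec[OF D(2), of \<tau>] True by simp
    qed
    ultimately show ?thesis
      using D(1) by (intro exI[of _ D] exI[of _ "[]"]) (simp add: lin_indep_def)
  next
    case False
    obtain D Cs \<alpha> where D: "is_run \<delta> s0 D" "\<forall>\<tau>. count D \<tau> \<le> 2 * card \<delta> + 2"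
      "\<forall>C\<in>set Cs. C \<in> simple_cycles_from \<delta> (supp D)" "lin_indep Cs"
      "out_of R = out_of D + (\<Sum>i<length Cs. repeat_mset (\<alpha> i) (out_of (Cs ! i)))"
      by (rule small_run_decomposition[OF reg fin(1) R])
    have "card S \<ge> 1" "card \<Sigma> \<ge> 1"
      using fin False by (auto simp: Suc_le_eq card_gt_0_iff)
    then have "2 * card \<delta> + 2 \<le> 12 * card S ^ (2 * card \<Sigma>) * fact (card \<Sigma>)"
      using card_transitions_le[OF G] quadratic_bound_le_power_fact[of "card S" "card \<Sigma>"]
      by linarith
    then have "mnorm D \<le> 12 * card S ^ (2 * card \<Sigma>) * fact (card \<Sigma>)"
      using D(2) by (intro mnorm_le) (meson le_trans)
    with D KR show ?thesis
      by blast
  qed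
qed

theorem theorem1:
  shows "\<exists>c :: nat. \<forall>\<Sigma> S s0 \<delta> K.
     regular_grammar \<Sigma> S s0 \<delta> \<longrightarrow> set_mset K \<subseteq> \<Sigma> \<longrightarrow>
     (K \<in> out_lang \<delta> s0 \<longleftrightarrow>
       (\<exists>D Cs (\<alpha> :: nat \<Rightarrow> nat).
          is_run \<delta> s0 D \<and>
          mnorm D \<le> c * card S ^ (2 * card \<Sigma>) * fact (card \<Sigma>) \<and>
          (\<forall>C\<in>set Cs. C \<in> simple_cycles_from \<delta> (supp D)) \<and>
          lin_indep Cs \<and>
          K = out_of D + (\<Sum>i<length Cs. repeat_mset (\<alpha> i) (out_of (Cs ! i)))))"
proof (intro exI[of _ 12] allI impI iffI)
  fix \<Sigma> S s0 \<delta> K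
  assume "regular_grammar \<Sigma> S s0 \<delta>" "K \<in> out_lang \<delta> s0"
  then show "\<exists>D Cs (\<alpha> :: nat \<Rightarrow> nat). is_run \<delta> s0 D \<and>
      mnorm D \<le> 12 * card S ^ (2 * card \<Sigma>) * fact (card \<Sigma>) \<and>
      (\<forall>C\<in>set Cs. C \<in> simple_cycles_from \<delta> (supp D)) \<and> lin_indep Cs \<and>
      K = out_of D + (\<Sum>i<length Cs. repeat_mset (\<alpha> i) (out_of (Cs ! i)))"
    by (rule out_lang_small_decomposition)
qed (auto intro: in_out_lang_if_decomposition)

end
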